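(* For every $a\ge h^*$, $H\ge h^*$ and $N\ge1$, $$P_a\big[\mathcal A\cap\mathcal C_H\cap\mathcal D_N\big]=0,$$ where $\mathcal A:=\{|\mathcal C_o^{h^*}\cap\mathbb T^+|=\infty\}$, $\mathcal C_H:=\{\Phi_n\le H\text{ for all }n\ge0\}$ and $\mathcal D_N:=\{|Z_n|\le N\text{ for all }n\ge0\}$.
   Context: Let $d\ge 2$ and let $\mathbb T$ be the infinite $(d+1)$-regular tree rooted at $o$, $\bar o$ a fixed neighbour of $o$, $\mathbb T^+:=\{x:\bar o\text{ not on the geodesic from }o\text{ to }x\}$, $d(\cdot,\cdot)$ the graph distance. Let $\phi$ be the Gaussian free field on $\mathbb T$ (centred Gaussian, covariance equal to the Green function $g(x,y)=\frac1{d+1}\mathbb E_x[\sum_{k\ge0}1_{X_k=y}]$ of simple random walk), law $P$, and $P_a:=P[\cdot\mid\phi_o=a]$; equivalently under $P_a$, $\phi_o=a$ and $\phi_x=\frac1d\phi_{\bar x}+Y_x$ for $x\neq o$ ($\bar x$ the parent of $x$ towards $o$, $(Y_x)$ i.i.d. $\mathcal N(0,\frac{d+1}d)$). $\mathcal C_o^h$ is the connected component of $o$ in $\{x:\phi_x\ge h\}$ and $h^*:=\inf\{h:P[|\mathcal C_o^h|=\infty]=0\}$. Set $Z_n:=\{x\in\mathcal C_o^{h^*}\cap\mathbb T^+:d(o,x)=n\}$ and $\Phi_n:=\max_{x\in Z_n}\phi_x$ (with $\max\emptyset=-\infty$). *)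

theory Defs
  imports "HOL-Probability.Probability"
begin

text \<open>Vertices are words: the root o is the empty list; the root has the
d+1 children [i] (i < d+1); every other vertex xs has the d children
xs @ [j] (j < d).  The parent of a non-root vertex xs is butlast xs.\<close>

definition Vert :: "nat \<Rightarrow> nat list set" where
  "Vert d = {xs. xs = [] \<or> (hd xs < d + 1 \<and> (\<forall>i \<in> set (tl xs). i < d))}"

definition root :: "nat list" where "root = []"

definition obar :: "nat \<Rightarrow> nat list" where "obar d = [d]"

definition adj :: "nat \<Rightarrow> nat list \<Rightarrow> nat list \<Rightarrow> bool" where
  "adj d x y \<longleftrightarrow> x \<in> Vert d \<and> y \<in> Vert d \<and>
     ((y \<noteq> [] \<and> x = butlast y) \<or> (x \<noteq> [] \<and> y = butlast x))"

text \<open>Graph distance from the root (the geodesic from o to xs is the chain of prefixes).\<close>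
definition dist_root :: "nat list \<Rightarrow> nat" where "dist_root xs = length xs"

text \<open>T^+: the vertices whose geodesic from o does not pass through obar.\<close>
definition Tplus :: "nat \<Rightarrow> nat list set" where
  "Tplus d = {xs \<in> Vert d. \<not> (take 1 xs = obar d)}"

definition cluster :: "nat \<Rightarrow> (nat list \<Rightarrow> real) \<Rightarrow> real \<Rightarrow> nat list set" where
  "cluster d phi h = {x \<in> Vert d. phi root \<ge> h \<and>
     (root, x) \<in> {(u, v). adj d u v \<and> phi u \<ge> h \<and> phi v \<ge> h}\<^sup>*}"

text \<open>i.i.d. N(0,(d+1)/d) variables Y_x indexed by the non-root vertices
(normal_density takes the standard deviation).\<close>
definition Yspace :: "nat \<Rightarrow> (nat list \<Rightarrow> real) measure" where
  "Yspace d = (\<Pi>\<^sub>M x \<in> Vert d - {root}.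
      density lborel (normal_density 0 (sqrt ((real d + 1) / real d))))"

text \<open>field_rev a Y rs is the field at the vertex rev rs, given phi_o = a:
phi_o = a, phi_x = phi_(parent x) / d + Y_x.\<close>
fun field_rev :: "nat \<Rightarrow> real \<Rightarrow> (nat list \<Rightarrow> real) \<Rightarrow> nat list \<Rightarrow> real" where
  "field_rev d a Y [] = a"
| "field_rev d a Y (r # rs) = field_rev d a Y rs / real d + Y (rev (r # rs))"

definition field :: "nat \<Rightarrow> real \<Rightarrow> (nat list \<Rightarrow> real) \<Rightarrow> nat list \<Rightarrow> real" where
  "field d a Y xs = field_rev d a Y (rev xs)"

text \<open>P_a as a measure on the driving noise; an event E (a predicate on field
configurations) has P_a-probability zero iff it is a null set of the
(completed) probability space.\<close>
definition Pa_null :: "nat \<Rightarrow> real \<Rightarrow> ((nat list \<Rightarrow> real) \<Rightarrow> bool) \<Rightarrow> bool" where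
  "Pa_null d a E \<longleftrightarrow>
     {Y \<in> space (Yspace d). E (field d a Y)} \<in> null_sets (completion (Yspace d))"

text \<open>The unconditioned law P: phi_o ~ N(0, g(o,o)) independent of the Y's.
The variance g(o,o) = d/(d-1) is the one forced by the recursion
(Var phi_x = Var phi_o for all x, by automorphism invariance).\<close>
definition Pspace :: "nat \<Rightarrow> (real \<times> (nat list \<Rightarrow> real)) measure" where
  "Pspace d = density lborel (normal_density 0 (sqrt (real d / (real d - 1))))
               \<Otimes>\<^sub>M Yspace d"

definition P_null :: "nat \<Rightarrow> ((nat list \<Rightarrow> real) \<Rightarrow> bool) \<Rightarrow> bool" where
  "P_null d E \<longleftrightarrow>
     {w \<in> space (Pspace d). E (field d (fst w) (snd w))} \<in> null_sets (completion (Pspace d))"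

definition hstar :: "nat \<Rightarrow> real" where
  "hstar d = Inf {h. P_null d (\<lambda>phi. infinite (cluster d phi h))}"

definition Zn :: "nat \<Rightarrow> (nat list \<Rightarrow> real) \<Rightarrow> nat \<Rightarrow> nat list set" where
  "Zn d phi n = {x \<in> cluster d phi (hstar d) \<inter> Tplus d. dist_root x = n}"

text \<open>Phi_n = max of phi over Z_n, with max of the empty set = -infinity.\<close>
definition Phin :: "nat \<Rightarrow> (nat list \<Rightarrow> real) \<Rightarrow> nat \<Rightarrow> ereal" where
  "Phin d phi n = Sup ((\<lambda>x. ereal (phi x)) ` Zn d phi n)"

definition eventA :: "nat \<Rightarrow> (nat list \<Rightarrow> real) \<Rightarrow> bool" where
  "eventA d phi \<longleftrightarrow> infinite (cluster d phi (hstar d) \<inter> Tplus d)"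

definition eventC :: "nat \<Rightarrow> real \<Rightarrow> (nat list \<Rightarrow> real) \<Rightarrow> bool" where
  "eventC d H phi \<longleftrightarrow> (\<forall>n. Phin d phi n \<le> ereal H)"

definition eventD :: "nat \<Rightarrow> nat \<Rightarrow> (nat list \<Rightarrow> real) \<Rightarrow> bool" where
  "eventD d N phi \<longleftrightarrow> (\<forall>n. card (Zn d phi n) \<le> N)"

end

theory Submission
  imports Defs
begin

text \<open>On the event, every generation \<open>Z\<^sub>n\<close> is nonempty, has at most \<open>N\<close> vertices and
carries field values at most \<open>H\<close>.  A vertex \<open>c\<close> of \<open>Z\<^sub>n\<^sub>+\<^sub>1\<close> has its parent \<open>p\<close> in \<open>Z\<^sub>n\<close>, so
\<open>h\<^sup>* \<le> \<phi>\<^sub>c = \<phi>\<^sub>p / d + Y\<^sub>c \<le> H / d + Y\<^sub>c\<close>.  The noises of the at most \<open>(d + 1) N\<close> children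
of \<open>Z\<^sub>n\<close> are independent of the first \<open>n\<close> generations, so with conditional probability
at least \<open>\<delta> = P[Y < h\<^sup>* - H / d]\<^bsup>(d+1)N\<^esup> > 0\<close> they all stay below \<open>h\<^sup>* - H / d\<close>, and then
\<open>Z\<^sub>n\<^sub>+\<^sub>1\<close> is empty.  Hence surviving \<open>n\<close> generations has probability at most \<open>(1 - \<delta>)\<^sup>n\<close>.\<close>

section \<open>Measure-theoretic facts\<close>

lemma pred_finite_set_valued:
  assumes "finite U" and "\<And>z. z \<in> U \<Longrightarrow> Measurable.pred M (\<lambda>x. P x z)"
  shows "Measurable.pred M (\<lambda>x. Q {z \<in> U. P x z})"
proof -
  have eq: "Q {z \<in> U. P x z} \<longleftrightarrow> (\<exists>S\<in>Pow U. Q S \<and> (\<forall>z\<in>U. P x z \<longleftrightarrow> z \<in> S))" for x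
  proof
    assume "\<exists>S\<in>Pow U. Q S \<and> (\<forall>z\<in>U. P x z \<longleftrightarrow> z \<in> S)"
    then obtain S where "S \<subseteq> U" "Q S" "\<forall>z\<in>U. P x z \<longleftrightarrow> z \<in> S" by blast
    moreover from this have "{z \<in> U. P x z} = S" by blast
    ultimately show "Q {z \<in> U. P x z}" by simp
  qed blast
  have "Measurable.pred M (\<lambda>x. P x z = (z \<in> S))" if "z \<in> U" for z S
    using assms(2)[OF that] pred_intros_logic(2)[OF assms(2)[OF that]] by (cases "z \<in> S") simp_all
  then show ?thesis
    unfolding eq using assms(1) by (intro pred_intros_finite pred_intros_conj1') auto
qed

lemma (in prob_space) measure_PiM_exists_notin:
  assumes "finite C" "C \<subseteq> J" "S \<in> sets M"
  shows "measure (PiM J (\<lambda>_. M)) {y \<in> space (PiM J (\<lambda>_. M)). \<exists>c\<in>C. y c \<notin> S}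
           = 1 - prob S ^ card C"
proof -
  interpret P: product_prob_space "\<lambda>_. M" J by unfold_locales
  let ?box = "{y \<in> space (PiM J (\<lambda>_. M)). \<forall>c\<in>C. y c \<in> S}"
  have "?box \<in> sets (PiM J (\<lambda>_. M))"
    using assms by (intro sets.sets_Collect_finite_All sets_Collect_single') auto
  moreover have "P.prob ?box = prob S ^ card C"
  proof -
    have "emeasure (PiM J (\<lambda>_. M)) ?box = ennreal (prob S) ^ card C"
      using P.emeasure_PiM_Collect[of C "\<lambda>_. S"] assms by (simp add: emeasure_eq_measure)
    also have "\<dots> = ennreal (prob S ^ card C)" by (simp add: ennreal_power)
    finally show ?thesis by (simp add: P.emeasure_eq_measure)
  qed
  moreover have "{y \<in> space (PiM J (\<lambda>_. M)). \<exists>c\<in>C. y c \<notin> S} = space (PiM J (\<lambda>_. M)) - ?box"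
    by blast
  ultimately show ?thesis by (simp add: P.prob_compl)
qed

lemma emeasure_PiM_union_le:
  assumes "product_sigma_finite M" "I \<inter> J = {}" "finite I" "finite J"
    and P: "Measurable.pred (PiM (I \<union> J) M) P" and X: "X \<in> sets (PiM I M)"
    and sections: "\<And>x. x \<in> space (PiM I M) \<Longrightarrow>
      emeasure (PiM J M) {y \<in> space (PiM J M). P (merge I J (x, y))} \<le> c * indicator X x"
  shows "emeasure (PiM (I \<union> J) M) {z \<in> space (PiM (I \<union> J) M). P z} \<le> c * emeasure (PiM I M) X"
proof -
  interpret product_sigma_finite M by fact
  interpret J: sigma_finite_measure "PiM J M" using sigma_finite[OF \<open>finite J\<close>] .
  let ?A = "{z \<in> space (PiM (I \<union> J) M). P z}"
  let ?B = "merge I J -` ?A \<inter> space (PiM I M \<Otimes>\<^sub>M PiM J M)"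
  have A: "?A \<in> sets (PiM (I \<union> J) M)" using P by (simp add: pred_def)
  have "emeasure (PiM (I \<union> J) M) ?A = emeasure (PiM I M \<Otimes>\<^sub>M PiM J M) ?B"
    by (subst distr_merge[OF assms(2-4), symmetric]) (simp add: emeasure_distr A)
  also have "\<dots> = (\<integral>\<^sup>+x. emeasure (PiM J M) (Pair x -` ?B) \<partial>PiM I M)"
    using A by (intro J.emeasure_pair_measure_alt) simp
  also have "\<dots> \<le> (\<integral>\<^sup>+x. c * indicator X x \<partial>PiM I M)"
  proof (rule nn_integral_mono)
    fix x assume x: "x \<in> space (PiM I M)"
    have "merge I J (x, y) \<in> space (PiM (I \<union> J) M)" if "y \<in> space (PiM J M)" for y
      using measurable_space[OF measurable_merge, of "(x, y)"] x that
      by (simp add: space_pair_measure)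
    then have "Pair x -` ?B = {y \<in> space (PiM J M). P (merge I J (x, y))}"
      using x by (auto simp: space_pair_measure)
    then show "emeasure (PiM J M) (Pair x -` ?B) \<le> c * indicator X x"
      using sections[OF x] by simp
  qed
  also have "\<dots> = c * emeasure (PiM I M) X" using X by (rule nn_integral_cmult_indicator)
  finally show ?thesis .
qed

lemma emeasure_zero_if_le_power:
  fixes r :: real
  assumes "0 \<le> r" "r < 1" "\<And>n. emeasure M A \<le> ennreal (r ^ n)"
  shows "emeasure M A = 0"
proof -
  have "(\<lambda>n. ennreal (r ^ n)) \<longlonglongrightarrow> ennreal 0"
    using assms(1,2) by (intro tendsto_ennrealI LIMSEQ_power_zero) auto
  then have "emeasure M A \<le> ennreal 0" by (rule LIMSEQ_le_const) (use assms(3) in auto)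
  then show ?thesis by simp
qed

lemma measure_normal_lessThan_pos:
  assumes "\<sigma> > 0"
  shows "measure (density lborel (normal_density \<mu> \<sigma>)) {..<t} > 0"
proof -
  let ?M = "density lborel (normal_density \<mu> \<sigma>)"
  interpret prob_space ?M using assms by (rule prob_space_normal_density)
  have nonzero: "normal_density \<mu> \<sigma> x \<noteq> 0" for x
    using normal_density_pos[OF assms, of \<mu> x] by simp
  have "emeasure ?M {..<t} \<noteq> 0"
  proof
    assume "emeasure ?M {..<t} = 0"
    then have "(\<integral>\<^sup>+ x. ennreal (normal_density \<mu> \<sigma> x) * indicator {..<t} x \<partial>lborel) = 0"
      by (subst (asm) emeasure_density) auto
    then have "AE x in lborel. ennreal (normal_density \<mu> \<sigma> x) * indicator {..<t} x = 0"
      by (subst (asm) nn_integral_0_iff_AE) auto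
    then have "AE x in lborel. x \<notin> {..<t}"
      by eventually_elim (use nonzero in \<open>auto split: split_indicator\<close>)
    then have "emeasure lborel {..<t} = 0"
      by (subst (asm) AE_iff_measurable[of "{..<t}"]) auto
    moreover have "emeasure lborel {t - 1<..<t} \<le> emeasure lborel {..<t}"
      by (rule emeasure_mono) auto
    ultimately show False by simp
  qed
  then show ?thesis by (simp add: emeasure_eq_measure zero_less_measure_iff)
qed

section \<open>Levels and clusters of the tree\<close>

lemma Vert_snoc: "y @ [c] \<in> Vert d \<Longrightarrow> y \<in> Vert d"
  unfolding Vert_def by (cases y) auto

lemma Vert_take: "z \<in> Vert d \<Longrightarrow> take k z \<in> Vert d"
  unfolding Vert_def by (cases z; cases k) (auto dest: in_set_takeD)

lemma le_if_in_set_Vert: "z \<in> Vert d \<Longrightarrow> i \<in> set z \<Longrightarrow> i \<le> d"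
  unfolding Vert_def by (cases z) auto

lemma Tplus_take: "z \<in> Tplus d \<Longrightarrow> take k z \<in> Tplus d"
  using Vert_take[of z d k] by (cases k) (auto simp: Tplus_def obar_def)

definition level :: "nat \<Rightarrow> nat \<Rightarrow> nat list set" where
  "level d k = {z \<in> Vert d. length z = k}"

text \<open>Levels \<open>1\<close> to \<open>n\<close>: the noise coordinates (indexed by non-root vertices) that the
field up to level \<open>n\<close> depends on.\<close>
definition levels_upto :: "nat \<Rightarrow> nat \<Rightarrow> nat list set" where
  "levels_upto d n = {z \<in> Vert d. 1 \<le> length z \<and> length z \<le> n}"

lemma finite_level: "finite (level d k)"
proof -
  have "level d k \<subseteq> {xs. set xs \<subseteq> {..d} \<and> length xs = k}"
    by (auto simp: level_def le_if_in_set_Vert)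
  then show ?thesis using finite_lists_length_eq[of "{..d}" k] finite_subset by auto
qed

lemma finite_levels_upto: "finite (levels_upto d n)"
proof -
  have "levels_upto d n \<subseteq> (\<Union>k\<le>n. level d k)"
    by (auto simp: levels_upto_def level_def)
  then show ?thesis using finite_level by (auto intro: finite_subset)
qed

lemma levels_upto_Suc: "levels_upto d (Suc n) = levels_upto d n \<union> level d (Suc n)"
  by (auto simp: levels_upto_def level_def)

lemma levels_upto_level_disjoint: "levels_upto d n \<inter> level d (Suc n) = {}"
  by (auto simp: levels_upto_def level_def)

lemma card_children_le:
  assumes "finite Z"
  shows "card {c \<in> level d (Suc n). butlast c \<in> Z} \<le> (d + 1) * card Z"
proof -
  have "{c \<in> level d (Suc n). butlast c \<in> Z} \<subseteq> (\<lambda>(p, i). p @ [i]) ` (Z \<times> {..d})"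
  proof
    fix c assume c: "c \<in> {c \<in> level d (Suc n). butlast c \<in> Z}"
    then have "c \<in> Vert d" "c \<noteq> []" by (auto simp: level_def)
    then have "c = butlast c @ [last c]" "last c \<le> d" by (auto intro: le_if_in_set_Vert)
    then show "c \<in> (\<lambda>(p, i). p @ [i]) ` (Z \<times> {..d})" using c by force
  qed
  then have "card {c \<in> level d (Suc n). butlast c \<in> Z} \<le> card ((\<lambda>(p, i). p @ [i]) ` (Z \<times> {..d}))"
    using assms by (intro card_mono) auto
  also have "\<dots> \<le> card (Z \<times> {..d})" by (rule card_image_le) (use assms in simp)
  also have "\<dots> = (d + 1) * card Z" by (simp add: card_cartesian_product)
  finally show ?thesis .
qed

lemma prefixes_above_if_mem_cluster:
  assumes "z \<in> cluster d phi h" "k \<le> length z"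
  shows "h \<le> phi (take k z)"
proof -
  let ?R = "{(u, v). adj d u v \<and> phi u \<ge> h \<and> phi v \<ge> h}"
  have "(root, z) \<in> ?R\<^sup>*" and root: "h \<le> phi root" using assms(1) by (auto simp: cluster_def)
  from this(1) have "\<forall>k \<le> length z. h \<le> phi (take k z)"
  proof (induction rule: rtrancl_induct)
    case base then show ?case using root by (simp add: root_def)
  next
    case (step u v)
    have u: "h \<le> phi (take k u)" for k
      using step.IH step(2) by (cases "k \<le> length u") auto
    have "take k v = take k u" if "k < length v" for k
      using step(2) that unfolding adj_def by (auto simp: take_butlast)
    then have "h \<le> phi (take k v)" if "k < length v" for k
      using u that by simp
    then show ?case using step(2) by (auto simp: le_less)
  qed
  then show ?thesis using assms(2) by blast
qed

lemma mem_cluster_if_prefixes_above: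
  assumes "z \<in> Vert d" "\<And>k. k \<le> length z \<Longrightarrow> h \<le> phi (take k z)"
  shows "z \<in> cluster d phi h"
proof -
  let ?R = "{(u, v). adj d u v \<and> phi u \<ge> h \<and> phi v \<ge> h}"
  have "(root, z) \<in> ?R\<^sup>*" using assms
  proof (induction z rule: rev_induct)
    case Nil then show ?case by (simp add: root_def)
  next
    case (snoc c y)
    have "y \<in> Vert d" using snoc.prems(1) by (rule Vert_snoc)
    moreover have "h \<le> phi (take k y)" if "k \<le> length y" for k
      using snoc.prems(2)[of k] that by simp
    ultimately have "(root, y) \<in> ?R\<^sup>*" using snoc.IH by blast
    moreover have "(y, y @ [c]) \<in> ?R"
      using snoc.prems(2)[of "length y"] snoc.prems(2)[of "length y + 1"] \<open>y \<in> Vert d\<close> snoc.prems(1)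
      by (simp add: adj_def)
    ultimately show ?case by (rule rtrancl_into_rtrancl)
  qed
  moreover have "h \<le> phi root" using assms(2)[of 0] by (simp add: root_def)
  ultimately show ?thesis using assms(1) by (simp add: cluster_def)
qed

lemma cluster_subset_Vert: "cluster d phi h \<subseteq> Vert d"
  by (auto simp: cluster_def)

lemma mem_cluster_iff:
  "z \<in> Vert d \<Longrightarrow> z \<in> cluster d phi h \<longleftrightarrow> (\<forall>k \<le> length z. h \<le> phi (take k z))"
  by (metis mem_cluster_if_prefixes_above prefixes_above_if_mem_cluster)

section \<open>Survivors\<close>

lemma field_Nil: "field d a Y [] = a"
  by (simp add: field_def)

lemma field_snoc: "field d a Y (z @ [c]) = field d a Y z / real d + Y (z @ [c])"
  by (simp add: field_def)

lemma field_cong: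
  assumes "\<And>k. 1 \<le> k \<Longrightarrow> k \<le> length z \<Longrightarrow> X (take k z) = Y (take k z)"
  shows "field d a X z = field d a Y z"
  using assms
proof (induction z rule: rev_induct)
  case Nil then show ?case by (simp add: field_Nil)
next
  case (snoc c z)
  have "field d a X z = field d a Y z"
  proof (rule snoc.IH)
    fix k assume "1 \<le> k" "k \<le> length z"
    then show "X (take k z) = Y (take k z)" using snoc.prems[of k] by simp
  qed
  moreover have "X (z @ [c]) = Y (z @ [c])" using snoc.prems[of "length z + 1"] by simp
  ultimately show ?case by (simp add: field_snoc)
qed

lemma field_eq_if_agree:
  assumes "\<forall>v\<in>levels_upto d n. X v = Y v" "z \<in> Vert d" "length z \<le> n"
  shows "field d a X z = field d a Y z"
  using assms Vert_take by (intro field_cong) (auto simp: levels_upto_def)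

text \<open>For \<open>h = h\<^sup>*\<close>, \<open>survivors d a h Y k\<close> is \<open>Z\<^sub>k\<close> for the field \<open>field d a Y\<close>.\<close>
definition path_above :: "nat \<Rightarrow> real \<Rightarrow> real \<Rightarrow> (nat list \<Rightarrow> real) \<Rightarrow> nat list \<Rightarrow> bool" where
  "path_above d a h Y z \<longleftrightarrow> (\<forall>k \<le> length z. h \<le> field d a Y (take k z))"

definition survivors :: "nat \<Rightarrow> real \<Rightarrow> real \<Rightarrow> (nat list \<Rightarrow> real) \<Rightarrow> nat \<Rightarrow> nat list set" where
  "survivors d a h Y k = {z \<in> level d k \<inter> Tplus d. path_above d a h Y z}"

definition survives_bounded ::
    "nat \<Rightarrow> real \<Rightarrow> real \<Rightarrow> real \<Rightarrow> nat \<Rightarrow> nat \<Rightarrow> (nat list \<Rightarrow> real) \<Rightarrow> bool" where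
  "survives_bounded d a h H N n Y \<longleftrightarrow> (\<forall>k\<le>n. survivors d a h Y k \<noteq> {} \<and>
     card (survivors d a h Y k) \<le> N \<and> (\<forall>z\<in>survivors d a h Y k. field d a Y z \<le> H))"

lemma path_above_take: "path_above d a h Y z \<Longrightarrow> path_above d a h Y (take k z)"
  by (auto simp: path_above_def min_def)

lemma cluster_Tplus_level_eq:
  "{z \<in> cluster d (field d a Y) h \<inter> Tplus d. length z = k} = survivors d a h Y k"
  by (auto simp: survivors_def level_def path_above_def Tplus_def mem_cluster_iff
      dest: subsetD[OF cluster_subset_Vert])

lemma survivors_nonempty_if_infinite:
  assumes "infinite (cluster d (field d a Y) h \<inter> Tplus d)"
  shows "survivors d a h Y k \<noteq> {}"
proof -
  have "\<not> cluster d (field d a Y) h \<inter> Tplus d \<subseteq> (\<Union>j<k. level d j)"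
  proof
    assume "cluster d (field d a Y) h \<inter> Tplus d \<subseteq> (\<Union>j<k. level d j)"
    then have "finite (cluster d (field d a Y) h \<inter> Tplus d)"
      by (rule finite_subset) (simp add: finite_level)
    with assms show False by contradiction
  qed
  then obtain z where z: "z \<in> cluster d (field d a Y) h \<inter> Tplus d" "z \<notin> (\<Union>j<k. level d j)"
    by blast
  then have "k \<le> length z" by (auto simp: level_def Tplus_def)
  have "path_above d a h Y z"
    using z(1) mem_cluster_iff by (auto simp: path_above_def Tplus_def)
  then have "take k z \<in> survivors d a h Y k"
    using z(1) \<open>k \<le> length z\<close> Tplus_take[of z d k] Vert_take path_above_take
    by (auto simp: survivors_def level_def Tplus_def)
  then show ?thesis by blast
qed

lemma survives_bounded_if_events:
  assumes "eventA d (field d a Y)" "eventC d H (field d a Y)" "eventD d N (field d a Y)"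
  shows "survives_bounded d a (hstar d) H N n Y"
proof -
  have Zn: "Zn d (field d a Y) k = survivors d a (hstar d) Y k" for k
    using cluster_Tplus_level_eq by (simp add: Zn_def dist_root_def)
  have "field d a Y z \<le> H" if "z \<in> survivors d a (hstar d) Y k" for z k
  proof -
    have "ereal (field d a Y z) \<le> Phin d (field d a Y) k"
      using that unfolding Phin_def Zn by (auto intro: Sup_upper)
    also have "\<dots> \<le> ereal H" using assms(2) by (simp add: eventC_def)
    finally show ?thesis by simp
  qed
  then show ?thesis
    using assms(1,3) survivors_nonempty_if_infinite
    by (auto simp: survives_bounded_def eventA_def eventD_def Zn)
qed

lemma survivors_cong:
  assumes "\<forall>v\<in>levels_upto d n. X v = Y v" "k \<le> n"
  shows "survivors d a h X k = survivors d a h Y k"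
proof -
  have "path_above d a h X z = path_above d a h Y z" if "z \<in> level d k" for z
    using that assms field_eq_if_agree[OF assms(1) Vert_take]
    by (auto simp: path_above_def level_def)
  then show ?thesis by (auto simp: survivors_def)
qed

lemma survives_bounded_cong:
  assumes "\<forall>v\<in>levels_upto d n. X v = Y v"
  shows "survives_bounded d a h H N n X = survives_bounded d a h H N n Y"
proof -
  have "field d a X z = field d a Y z" if "z \<in> survivors d a h X k" "k \<le> n" for z k
    using that field_eq_if_agree[OF assms] by (auto simp: survivors_def level_def)
  then show ?thesis
    using survivors_cong[OF assms] unfolding survives_bounded_def by auto
qed

lemma survives_bounded_mono:
  "survives_bounded d a h H N n Y \<Longrightarrow> m \<le> n \<Longrightarrow> survives_bounded d a h H N m Y"
  unfolding survives_bounded_def by (meson order_trans)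

lemma survivor_child_noise_ge:
  assumes "survives_bounded d a h H N (Suc n) Y"
  obtains c where "c \<in> level d (Suc n)" "butlast c \<in> survivors d a h Y n" "h - H / real d \<le> Y c"
proof -
  obtain c where c: "c \<in> survivors d a h Y (Suc n)"
    using assms by (auto simp: survives_bounded_def)
  then have "c \<noteq> []" by (auto simp: survivors_def level_def)
  then obtain p i where p: "c = p @ [i]" by (metis rev_exhaust)
  have "p \<in> survivors d a h Y n"
    using c Tplus_take[of c d "length p"] Vert_snoc path_above_take[of d a h Y c "length p"]
    by (auto simp: survivors_def level_def p)
  then have "field d a Y p \<le> H"
    using assms[unfolded survives_bounded_def, rule_format, of n] by auto
  then have "field d a Y p / real d \<le> H / real d" by (simp add: divide_right_mono)
  moreover have "h \<le> field d a Y c"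
    using c by (auto simp: survivors_def path_above_def)
  ultimately have "h - H / real d \<le> Y c" by (simp add: p field_snoc)
  moreover have "c \<in> level d (Suc n)" using c by (simp add: survivors_def)
  moreover have "butlast c \<in> survivors d a h Y n" using \<open>p \<in> survivors d a h Y n\<close> by (simp add: p)
  ultimately show thesis using that by blast
qed

section \<open>Decay of the survival probability\<close>

definition noise :: "nat \<Rightarrow> real measure" where
  "noise d = density lborel (normal_density 0 (sqrt ((real d + 1) / real d)))"

lemma prob_space_noise: "d > 0 \<Longrightarrow> prob_space (noise d)"
  unfolding noise_def by (rule prob_space_normal_density) auto

lemma sets_noise[simp, measurable_cong]: "sets (noise d) = sets borel"
  by (simp add: noise_def)

lemma space_noise[simp]: "space (noise d) = UNIV"
  by (simp add: noise_def)

lemma measurable_field: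
  assumes "z \<in> Vert d" "length z \<le> n"
  shows "(\<lambda>Y. field d a Y z) \<in> borel_measurable (PiM (levels_upto d n) (\<lambda>_. noise d))"
  using assms
proof (induction z rule: rev_induct)
  case Nil then show ?case by (simp add: field_Nil)
next
  case (snoc c z)
  have [measurable]: "(\<lambda>Y. field d a Y z) \<in> borel_measurable (PiM (levels_upto d n) (\<lambda>_. noise d))"
    using snoc Vert_snoc by simp
  have "z @ [c] \<in> levels_upto d n" using snoc.prems by (auto simp: levels_upto_def)
  then show ?case unfolding field_snoc by measurable
qed

lemma pred_survives_bounded:
  "Measurable.pred (PiM (levels_upto d n) (\<lambda>_. noise d)) (survives_bounded d a h H N n)"
proof -
  let ?M = "PiM (levels_upto d n) (\<lambda>_. noise d)"
  define U where "U = {z \<in> Vert d \<inter> Tplus d. length z \<le> n}"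
  define Q where "Q S \<longleftrightarrow> (\<forall>k\<le>n. {z \<in> S. length z = k} \<noteq> {} \<and> card {z \<in> S. length z = k} \<le> N)"
    for S :: "nat list set"
  have "U \<subseteq> (\<Union>k\<le>n. level d k)" by (auto simp: U_def level_def)
  then have "finite U" by (rule finite_subset) (simp add: finite_level)
  have [measurable]: "(\<lambda>Y. field d a Y z) \<in> borel_measurable ?M" if "z \<in> U" for z
    using that by (intro measurable_field) (auto simp: U_def)
  have path: "Measurable.pred ?M (\<lambda>Y. path_above d a h Y z)" if "z \<in> U" for z
  proof -
    have [measurable]: "(\<lambda>Y. field d a Y (take k z)) \<in> borel_measurable ?M" for k
      using that Vert_take by (intro measurable_field) (auto simp: U_def)
    show ?thesis unfolding path_above_def by measurable
  qed
  have survivors_eq: "survivors d a h Y k = {z \<in> {z \<in> U. path_above d a h Y z}. length z = k}"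
    if "k \<le> n" for Y k
    using that by (auto simp: survivors_def level_def U_def Tplus_def)
  have bounded_eq: "(\<forall>k\<le>n. \<forall>z\<in>{z \<in> {z \<in> U. path_above d a h Y z}. length z = k}. field d a Y z \<le> H)
      \<longleftrightarrow> (\<forall>z\<in>U. path_above d a h Y z \<longrightarrow> field d a Y z \<le> H)" for Y
    by (auto simp: U_def)
  have eq: "survives_bounded d a h H N n = (\<lambda>Y.
      Q {z \<in> U. path_above d a h Y z} \<and> (\<forall>z\<in>U. path_above d a h Y z \<longrightarrow> field d a Y z \<le> H))"
    unfolding fun_eq_iff survives_bounded_def Q_def bounded_eq[symmetric]
    by (simp add: survivors_eq imp_conjR all_conj_distrib)
  have "Measurable.pred ?M (\<lambda>Y. Q {z \<in> U. path_above d a h Y z})"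
    using \<open>finite U\<close> path by (rule pred_finite_set_valued)
  moreover have "Measurable.pred ?M (\<lambda>Y. \<forall>z\<in>U. path_above d a h Y z \<longrightarrow> field d a Y z \<le> H)"
    using \<open>finite U\<close> path by (intro pred_intros_finite pred_intros_logic) auto
  ultimately show ?thesis unfolding eq by (rule pred_intros_logic(3))
qed

lemma merge_levels_upto_agree:
  "\<forall>v\<in>levels_upto d n. merge (levels_upto d n) (level d (Suc n)) (x, y) v = x v"
  using levels_upto_level_disjoint by simp

lemma survivor_child_noise_ge_merge:
  assumes "survives_bounded d a h H N (Suc n) (merge (levels_upto d n) (level d (Suc n)) (x, y))"
  obtains c where "c \<in> level d (Suc n)" "butlast c \<in> survivors d a h x n" "h - H / real d \<le> y c"
proof -
  obtain c where "c \<in> level d (Suc n)"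
      "butlast c \<in> survivors d a h (merge (levels_upto d n) (level d (Suc n)) (x, y)) n"
      "h - H / real d \<le> merge (levels_upto d n) (level d (Suc n)) (x, y) c"
    using assms by (rule survivor_child_noise_ge)
  then show thesis
    using that survivors_cong[OF merge_levels_upto_agree] levels_upto_level_disjoint by simp
qed

lemma emeasure_survival_section_le:
  fixes h H :: real and N :: nat
  assumes "d > 0" and x: "x \<in> space (PiM (levels_upto d n) (\<lambda>_. noise d))"
  defines "\<delta> \<equiv> measure (noise d) {..<h - H / real d} ^ ((d + 1) * N)"
  shows "emeasure (PiM (level d (Suc n)) (\<lambda>_. noise d))
      {y \<in> space (PiM (level d (Suc n)) (\<lambda>_. noise d)).
         survives_bounded d a h H N (Suc n) (merge (levels_upto d n) (level d (Suc n)) (x, y))}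
    \<le> ennreal (1 - \<delta>) * indicator {Y. survives_bounded d a h H N n Y} x"
proof -
  let ?L = "PiM (level d (Suc n)) (\<lambda>_. noise d)"
  let ?S = "{y \<in> space ?L.
    survives_bounded d a h H N (Suc n) (merge (levels_upto d n) (level d (Suc n)) (x, y))}"
  let ?t = "h - H / real d"
  interpret noise: prob_space "noise d" using assms(1) by (rule prob_space_noise)
  interpret L: prob_space ?L by (intro prob_space_PiM) (rule noise.prob_space_axioms)
  show ?thesis
  proof (cases "survives_bounded d a h H N n x")
    case False
    have "\<not> survives_bounded d a h H N (Suc n) (merge (levels_upto d n) (level d (Suc n)) (x, y))" for y
    proof
      assume "survives_bounded d a h H N (Suc n) (merge (levels_upto d n) (level d (Suc n)) (x, y))"
      then have "survives_bounded d a h H N n (merge (levels_upto d n) (level d (Suc n)) (x, y))"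
        by (rule survives_bounded_mono) simp
      then show False using False survives_bounded_cong[OF merge_levels_upto_agree] by simp
    qed
    then show ?thesis by simp
  next
    case True
    define C where "C = {c \<in> level d (Suc n). butlast c \<in> survivors d a h x n}"
    have "finite C" "C \<subseteq> level d (Suc n)" using finite_level by (auto simp: C_def)
    have "finite (survivors d a h x n)" using finite_level by (auto simp: survivors_def)
    then have "card C \<le> (d + 1) * card (survivors d a h x n)"
      unfolding C_def by (rule card_children_le)
    also have "\<dots> \<le> (d + 1) * N"
      using True unfolding survives_bounded_def by (intro mult_le_mono2) simp
    finally have "card C \<le> (d + 1) * N" .
    have "?S \<subseteq> {y \<in> space ?L. \<exists>c\<in>C. y c \<notin> {..<?t}}"
      by (auto simp: C_def not_less elim!: survivor_child_noise_ge_merge)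
    moreover have "{y \<in> space ?L. \<exists>c\<in>C. y c \<notin> {..<?t}} \<in> sets ?L"
      using \<open>finite C\<close> \<open>C \<subseteq> level d (Suc n)\<close>
      by (intro sets.sets_Collect_finite_Ex sets_Collect_single') auto
    ultimately have "emeasure ?L ?S \<le> emeasure ?L {y \<in> space ?L. \<exists>c\<in>C. y c \<notin> {..<?t}}"
      by (rule emeasure_mono)
    also have "\<dots> = ennreal (1 - measure (noise d) {..<?t} ^ card C)"
      using noise.measure_PiM_exists_notin[OF \<open>finite C\<close> \<open>C \<subseteq> level d (Suc n)\<close>, of "{..<?t}"]
      by (simp add: L.emeasure_eq_measure)
    also have "\<dots> \<le> ennreal (1 - \<delta>)"
      using \<open>card C \<le> (d + 1) * N\<close> noise.prob_le_1[of "{..<?t}"] measure_nonneg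
      unfolding \<delta>_def by (intro ennreal_leI diff_left_mono power_decreasing) auto
    finally show ?thesis using True by simp
  qed
qed

lemma emeasure_survives_bounded_le:
  fixes h H :: real and N :: nat
  assumes "d > 0"
  defines "\<delta> \<equiv> measure (noise d) {..<h - H / real d} ^ ((d + 1) * N)"
  shows "emeasure (PiM (levels_upto d n) (\<lambda>_. noise d))
      {Y \<in> space (PiM (levels_upto d n) (\<lambda>_. noise d)). survives_bounded d a h H N n Y}
    \<le> ennreal ((1 - \<delta>) ^ n)"
proof (induction n)
  case 0
  interpret prob_space "PiM (levels_upto d 0) (\<lambda>_. noise d)"
    using assms(1) by (intro prob_space_PiM prob_space_noise)
  show ?case using emeasure_le_1 by simp
next
  case (Suc n)
  let ?I = "levels_upto d n" and ?J = "level d (Suc n)"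
  let ?X = "{Y \<in> space (PiM ?I (\<lambda>_. noise d)). survives_bounded d a h H N n Y}"
  interpret noise: prob_space "noise d" using assms(1) by (rule prob_space_noise)
  have "0 \<le> \<delta>" "\<delta> \<le> 1"
    unfolding \<delta>_def by (auto intro: power_le_one noise.prob_le_1)
  have "emeasure (PiM (?I \<union> ?J) (\<lambda>_. noise d))
      {Y \<in> space (PiM (?I \<union> ?J) (\<lambda>_. noise d)). survives_bounded d a h H N (Suc n) Y}
    \<le> ennreal (1 - \<delta>) * emeasure (PiM ?I (\<lambda>_. noise d)) ?X"
  proof (rule emeasure_PiM_union_le)
    show "product_sigma_finite (\<lambda>_. noise d)"
      by (simp add: product_sigma_finite_def prob_space_imp_sigma_finite noise.prob_space_axioms)
    show "Measurable.pred (PiM (?I \<union> ?J) (\<lambda>_. noise d)) (survives_bounded d a h H N (Suc n))"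
      using pred_survives_bounded[where n = "Suc n"] by (simp add: levels_upto_Suc)
    show "?X \<in> sets (PiM ?I (\<lambda>_. noise d))"
      using pred_survives_bounded by (simp add: pred_def)
    show "?I \<inter> ?J = {}" by (rule levels_upto_level_disjoint)
    show "finite ?I" "finite ?J" by (rule finite_levels_upto finite_level)+
    fix x assume x: "x \<in> space (PiM ?I (\<lambda>_. noise d))"
    show "emeasure (PiM ?J (\<lambda>_. noise d))
        {y \<in> space (PiM ?J (\<lambda>_. noise d)). survives_bounded d a h H N (Suc n) (merge ?I ?J (x, y))}
      \<le> ennreal (1 - \<delta>) * indicator ?X x"
      using emeasure_survival_section_le[OF assms(1) x, of a h H N] x
      unfolding \<delta>_def by (simp add: indicator_def)
  qed
  also have "\<dots> \<le> ennreal (1 - \<delta>) * ennreal ((1 - \<delta>) ^ n)"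
    by (rule mult_left_mono[OF Suc.IH]) simp
  also have "\<dots> = ennreal ((1 - \<delta>) ^ Suc n)"
    using \<open>\<delta> \<le> 1\<close> by (simp add: ennreal_mult[symmetric])
  finally show ?case by (simp add: levels_upto_Suc)
qed

lemma survives_bounded_forever_null:
  assumes "d > 0"
  shows "{Y \<in> space (Yspace d). \<forall>n. survives_bounded d a h H N n Y} \<in> null_sets (Yspace d)"
proof -
  let ?V = "Vert d - {root}"
  let ?M = "\<lambda>n. PiM (levels_upto d n) (\<lambda>_. noise d)"
  define \<delta> where "\<delta> = measure (noise d) {..<h - H / real d} ^ ((d + 1) * N)"
  define G where "G n = prod_emb ?V (\<lambda>_. noise d) (levels_upto d n)
      {Y \<in> space (?M n). survives_bounded d a h H N n Y}" for n
  interpret noise: prob_space "noise d" using assms by (rule prob_space_noise)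
  interpret P: product_prob_space "\<lambda>_. noise d" ?V by unfold_locales
  have Yspace: "Yspace d = PiM ?V (\<lambda>_. noise d)" by (simp add: Yspace_def noise_def)
  have sub: "levels_upto d n \<subseteq> ?V" for n by (auto simp: levels_upto_def root_def)
  have X: "{Y \<in> space (?M n). survives_bounded d a h H N n Y} \<in> sets (?M n)" for n
    using pred_survives_bounded by (simp add: pred_def)
  have "Y \<in> G n \<longleftrightarrow> Y \<in> space (PiM ?V (\<lambda>_. noise d)) \<and> survives_bounded d a h H N n Y" for Y n
    using survives_bounded_cong[of d n "restrict Y (levels_upto d n)" Y] sub[of n]
    by (auto simp: G_def prod_emb_def space_PiM)
  then have eq: "{Y \<in> space (Yspace d). \<forall>n. survives_bounded d a h H N n Y} = (\<Inter>n. G n)"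
    by (auto simp: Yspace)
  have G: "G n \<in> sets (PiM ?V (\<lambda>_. noise d))" for n
    using sub X by (simp add: G_def)
  have "emeasure (PiM ?V (\<lambda>_. noise d)) (\<Inter>n. G n) \<le> ennreal ((1 - \<delta>) ^ n)" for n
  proof -
    have "emeasure (PiM ?V (\<lambda>_. noise d)) (\<Inter>n. G n) \<le> emeasure (PiM ?V (\<lambda>_. noise d)) (G n)"
      using G by (intro emeasure_mono) auto
    also have "\<dots> = emeasure (?M n) {Y \<in> space (?M n). survives_bounded d a h H N n Y}"
      unfolding G_def using sub finite_levels_upto X by (rule P.emeasure_PiM_emb')
    also have "\<dots> \<le> ennreal ((1 - \<delta>) ^ n)"
      unfolding \<delta>_def using assms by (rule emeasure_survives_bounded_le)
    finally show ?thesis .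
  qed
  moreover have "0 < \<delta>" "\<delta> \<le> 1"
    using measure_normal_lessThan_pos[of "sqrt ((real d + 1) / real d)" 0 "h - H / real d"] assms
    unfolding \<delta>_def noise_def[symmetric] by (auto intro: power_le_one noise.prob_le_1)
  ultimately have "emeasure (PiM ?V (\<lambda>_. noise d)) (\<Inter>n. G n) = 0"
    by (intro emeasure_zero_if_le_power[of "1 - \<delta>"]) auto
  moreover have "(\<Inter>n. G n) \<in> sets (PiM ?V (\<lambda>_. noise d))"
    using G by (intro sets.countable_INT) auto
  ultimately show ?thesis unfolding eq by (simp add: Yspace null_sets_def)
qed

theorem lemma4p2:
  fixes d N :: nat and a H :: real
  assumes "d \<ge> 2" and "a \<ge> hstar d" and "H \<ge> hstar d" and "N \<ge> 1"
  shows "Pa_null d a (\<lambda>phi. eventA d phi \<and> eventC d H phi \<and> eventD d N phi)"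
proof -
  have "{Y \<in> space (Yspace d). eventA d (field d a Y) \<and> eventC d H (field d a Y) \<and> eventD d N (field d a Y)}
      \<subseteq> {Y \<in> space (Yspace d). \<forall>n. survives_bounded d a (hstar d) H N n Y}"
    by (auto intro: survives_bounded_if_events)
  moreover have "{Y \<in> space (Yspace d). \<forall>n. survives_bounded d a (hstar d) H N n Y}
      \<in> null_sets (completion (Yspace d))"
    using assms(1) by (intro null_sets_completionI survives_bounded_forever_null) linarith
  ultimately show ?thesis unfolding Pa_null_def by (rule null_sets_completion_subset)
qed

end
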